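(* Let $V$ be an $m$-dimensional vector space of differentiable functions with basis $B=\{f_1,\ldots,f_m\}$ such that $f'\in V$ for every $f\in V$, and let $\mathcal D$ be the $m\times m$ matrix differential operator of $V$ with respect to $B$. Let $\phi_n(s)=a_ns^n+\cdots+a_1s+a_0$ be a polynomial of degree $n$ with $a_0=\phi_n(0)\neq 0$, and let $\frac{1}{\phi_n(s)}=\sum_{k=0}^\infty c_ks^k$ be its Maclaurin expansion. Assume the matrix $\phi_n(\mathcal D)$ is invertible. Let $g\in V$ with coordinate vector $\mathbf g=[g]_B$. Then: (i) for all complex $t$ with $|t|$ sufficiently small, the vector series $\sum_{k=0}^\infty c_kt^k\mathcal D^k\mathbf g$ converges and equals $(\phi_n(t\mathcal D))^{-1}\mathbf g$, each of whose $m$ components is a rational function of $t$ defined at $t=0$ and at $t=1$; (ii) for each $j=1,\ldots,m$, the numerical series formed by the $j$-th components of $c_k\mathcal D^k\mathbf g$, $k=0,1,2,\ldots$, is summable by the Euler method $\mathfrak E$, and $$\sum_{k=0}^\infty c_k\mathcal D^k\mathbf g=(\phi_n(\mathcal D))^{-1}\mathbf g\quad(\mathfrak E)$$ componentwise; (iii) the function $y_p\in V$ with coordinate vector $(\phi_n(\mathcal D))^{-1}\mathbf g$ is a particular solution of the differential equation $\phi_n(D)y=g$.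
   Context: Matrix differential operator: if $f_i'=\sum_{j=1}^m c_{ij}f_j$ for $i=1,\ldots,m$, then $\mathcal D$ is the $m\times m$ matrix whose $i$-th column is $(c_{i1},\ldots,c_{im})^T$, i.e. the coordinate vector of $f_i'$; for $f\in V$ with coordinate vector $\mathbf f=[f]_B$ one has $[f']_B=\mathcal D\mathbf f$. For a polynomial $\psi(s)=\sum_j b_js^j$, $\psi(\mathcal D)=\sum_j b_j\mathcal D^j$ (with $\mathcal D^0=I_m$) and $\psi(D)y=\sum_j b_jy^{(j)}$. Euler summation: a numerical series $\sum_{n=0}^\infty a_n$ is summable by the Euler method $\mathfrak E$ to $s$, written $\sum a_n=s\,(\mathfrak E)$, if the power series $\sum_{n=0}^\infty a_nt^n$ converges for all sufficiently small $|t|$ and its sum extends to a single-valued analytic function $F$ of the complex variable $t$ on an open connected region containing $0$ and $1$, with $F(1)=s$. *)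

theory Defs
  imports "HOL-Analysis.Analysis" "HOL-Computational_Algebra.Polynomial"
begin

primrec matpow :: "'a::semiring_1^'n^'n \<Rightarrow> nat \<Rightarrow> 'a^'n^'n" where
  "matpow A 0 = mat 1"
| "matpow A (Suc k) = A ** matpow A k"

definition mat_scale :: "'a::times \<Rightarrow> 'a^'n^'m \<Rightarrow> 'a^'n^'m" where
  "mat_scale c A = (\<chi> i j. c * A $ i $ j)"

definition poly_matrix :: "'a::comm_ring_1 poly \<Rightarrow> 'a^'n^'n \<Rightarrow> 'a^'n^'n" where
  "poly_matrix p A = (\<Sum>j\<le>degree p. mat_scale (coeff p j) (matpow A j))"

primrec nth_vderiv :: "nat \<Rightarrow> (real \<Rightarrow> complex) \<Rightarrow> real \<Rightarrow> complex" where
  "nth_vderiv 0 y = y"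
| "nth_vderiv (Suc k) y = (\<lambda>x. vector_derivative (nth_vderiv k y) (at x))"

text \<open>Euler summability (method E): the power series sum a_n t^n converges for all
  sufficiently small |t| and its sum extends to a single-valued analytic function F on an
  open connected region containing 0 and 1, with F(1) = s.\<close>
definition euler_sums :: "(nat \<Rightarrow> complex) \<Rightarrow> complex \<Rightarrow> bool" where
  "euler_sums a s \<longleftrightarrow>
     (\<exists>\<rho>>0. (\<forall>t. norm t < \<rho> \<longrightarrow> summable (\<lambda>n. a n * t ^ n)) \<and>
       (\<exists>F U. open U \<and> connected U \<and> 0 \<in> U \<and> 1 \<in> U \<and> F holomorphic_on U \<and>
          (\<forall>t\<in>U \<inter> ball 0 \<rho>. F t = (\<Sum>n. a n * t ^ n)) \<and> F 1 = s))"

end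

(* The coefficients c_k form the convolution inverse of the coefficients of phi, so phi(tD)
   maps the series sum_k c_k t^k D^k g to g; the series converges for small |t| because
   |D^k v| grows at most geometrically. Hence its sum is phi(tD)^-1 g, whose components are,
   by Cramer's rule, quotients of polynomials in t with denominator det phi(tD). This
   denominator equals phi(0)^m at t = 0 and is nonzero at t = 1 by invertibility, so the
   rational function continues the series analytically to the complement of its finitely
   many poles, a connected open set containing 0 and 1: this is Euler summability.
   Finally, differentiation acts on coordinates as D, so phi(D) y_p has coordinates
   phi(D) phi(D)^-1 g = g. *)

theory Submission
  imports Defs "HOL-Complex_Analysis.Complex_Analysis"
begin

lemma matrix_inv_right:
  fixes A :: "'a::field^'n^'n"
  assumes "invertible A"
  shows "A ** matrix_inv A = mat 1"
    and matrix_inv_left: "matrix_inv A ** A = mat 1"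
proof -
  have "\<exists>A'. A ** A' = mat 1 \<and> A' ** A = mat 1"
    using assms unfolding invertible_def by blast
  from someI_ex[OF this] show "A ** matrix_inv A = mat 1" "matrix_inv A ** A = mat 1"
    unfolding matrix_inv_def by auto
qed

lemma matrix_inv_mult_vec_eqI:
  fixes A :: "'a::field^'n^'n"
  assumes "invertible A" "A *v x = b"
  shows "matrix_inv A *v b = x"
  by (metis assms matrix_inv_left matrix_vector_mul_assoc matrix_vector_mul_lid)

lemma mult_matrix_inv_mult_vec:
  fixes A :: "'a::field^'n^'n"
  assumes "invertible A"
  shows "A *v (matrix_inv A *v b) = b"
  by (metis assms matrix_inv_right matrix_vector_mul_assoc matrix_vector_mul_lid)

lemma mat_scale_mult_vec: "mat_scale a M *v v = a *s (M *v v)"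
  by (simp add: mat_scale_def matrix_vector_mult_def vec_eq_iff sum_distrib_left mult.assoc)

lemma sum_matrix_mult_vec:
  fixes M :: "'i \<Rightarrow> 'a::comm_semiring_1^'n^'m"
  shows "(\<Sum>j\<in>J. M j) *v v = (\<Sum>j\<in>J. M j *v v)"
  by (induction J rule: infinite_finite_induct)
     (auto simp: matrix_vector_mult_def vec_eq_iff sum.distrib ring_distribs)

lemma matpow_add: "matpow D j ** matpow D k = matpow D (j + k)"
  by (induction j) (auto simp: matrix_mul_assoc[symmetric])

lemma matpow_Suc_mult_vec: "matpow D (Suc k) *v v = D *v (matpow D k *v v)"
  by (simp add: matrix_vector_mul_assoc)

lemma matpow_mat_scale: "matpow (mat_scale t D) j = mat_scale (t ^ j) (matpow D j)"
  for D :: "'a::comm_semiring_1^'n^'n"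
proof (induction j)
  case 0
  show ?case by (simp add: mat_scale_def mat_def vec_eq_iff)
next
  case (Suc j)
  then show ?case
    by (simp add: mat_scale_def matrix_matrix_mult_def vec_eq_iff sum_distrib_left mult_ac)
qed

lemma poly_matrix_mult_vec:
  "poly_matrix p M *v v = (\<Sum>j\<le>degree p. coeff p j *s (matpow M j *v v))"
  by (simp add: poly_matrix_def sum_matrix_mult_vec mat_scale_mult_vec)

lemma poly_matrix_mat_scale_mult_vec:
  "poly_matrix p (mat_scale t M) *v v = (\<Sum>j\<le>degree p. (coeff p j * t ^ j) *s (matpow M j *v v))"
  by (simp add: poly_matrix_mult_vec matpow_mat_scale mat_scale_mult_vec vector_smult_assoc)

lemma poly_matrix_mat_scale_1: "poly_matrix p (mat_scale 1 M) = poly_matrix p M"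
  by (simp add: mat_scale_def)

definition poly_mat_eval :: "'a::comm_semiring_0 poly^'n^'m \<Rightarrow> 'a \<Rightarrow> 'a^'n^'m" where
  "poly_mat_eval M t = (\<chi> i j. poly (M $ i $ j) t)"

lemma det_poly_mat_eval: "det (poly_mat_eval M t) = poly (det M) t"
  by (simp add: poly_mat_eval_def det_def poly_sum poly_prod)

lemma matrix_inv_poly_mat_eval_mult_vec:
  fixes M :: "'a::field poly^'n^'n"
  assumes "invertible (poly_mat_eval M t)"
  shows "(matrix_inv (poly_mat_eval M t) *v b) $ j =
           poly (det (\<chi> i l. if l = j then [:b $ i:] else M $ i $ l)) t / poly (det M) t"
proof -
  let ?A = "poly_mat_eval M t"
  have "det ?A \<noteq> 0"
    using assms by (simp add: invertible_det_nz)
  moreover have "?A *v (matrix_inv ?A *v b) = b"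
    by (rule mult_matrix_inv_mult_vec[OF assms])
  ultimately have "matrix_inv ?A *v b = (\<chi> k. det (\<chi> i l. if l = k then b $ i else ?A $ i $ l) / det ?A)"
    using cramer by blast
  then have "(matrix_inv ?A *v b) $ j = det (\<chi> i l. if l = j then b $ i else ?A $ i $ l) / det ?A"
    by simp
  also have "(\<chi> i l. if l = j then b $ i else ?A $ i $ l) =
             poly_mat_eval (\<chi> i l. if l = j then [:b $ i:] else M $ i $ l) t"
    by (simp add: poly_mat_eval_def vec_eq_iff)
  finally show ?thesis
    by (simp only: det_poly_mat_eval)
qed

definition scaled_poly_matrix :: "'a::comm_ring_1 poly \<Rightarrow> 'a^'n^'n \<Rightarrow> 'a poly^'n^'n" where
  "scaled_poly_matrix p D = (\<chi> i l. \<Sum>j\<le>degree p. monom (coeff p j * matpow D j $ i $ l) j)"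

lemma poly_matrix_mat_scale:
  "poly_matrix p (mat_scale t D) = poly_mat_eval (scaled_poly_matrix p D) t"
  unfolding poly_matrix_def scaled_poly_matrix_def poly_mat_eval_def matpow_mat_scale
  by (simp add: vec_eq_iff poly_sum poly_monom mat_scale_def sum_component mult_ac)

lemma poly_mat_eval_scaled_poly_matrix_0:
  "poly_mat_eval (scaled_poly_matrix p D) 0 = mat (coeff p 0)"
  by (simp add: poly_mat_eval_def scaled_poly_matrix_def poly_0_coeff_0 coeff_sum coeff_monom
      mat_def vec_eq_iff)

lemma poly_det_scaled_poly_matrix_0:
  "poly (det (scaled_poly_matrix p D)) 0 = poly p 0 ^ CARD('n)"
  for D :: "'a::comm_ring_1^'n^'n"
proof -
  have "poly (det (scaled_poly_matrix p D)) 0 = det (mat (coeff p 0) :: 'a^'n^'n)"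
    by (simp flip: det_poly_mat_eval add: poly_mat_eval_scaled_poly_matrix_0)
  then show ?thesis
    by (simp add: det_diagonal mat_def poly_0_coeff_0)
qed

lemma eventually_poly_nonzero_nhds:
  fixes p :: "'a::real_normed_field poly"
  assumes "poly p a \<noteq> 0"
  shows "eventually (\<lambda>x. poly p x \<noteq> 0) (nhds a)"
proof (rule tendsto_imp_eventually_ne)
  show "(poly p \<longlongrightarrow> poly p a) (nhds a)"
    using continuous_within_poly[of a UNIV p] by (simp add: continuous_at tendsto_at_iff_tendsto_nhds)
qed fact

lemma has_fps_expansion_of_sums:
  fixes c :: "nat \<Rightarrow> complex"
  assumes "r > 0" "\<And>s. norm s < r \<Longrightarrow> (\<lambda>k. c k * s ^ k) sums F s"
  shows "F has_fps_expansion Abs_fps c"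
proof -
  have "summable (\<lambda>k. c k * of_real (r / 2) ^ k)"
    using assms by (intro sums_summable[OF assms(2)]) auto
  from conv_radius_geI[OF this] have "ereal (r / 2) \<le> fps_conv_radius (Abs_fps c)"
    using assms(1) by (simp add: fps_conv_radius_def)
  then have "fps_conv_radius (Abs_fps c) > 0"
    using assms(1) by (meson ereal_less(2) half_gt_zero less_le_trans)
  moreover have "eventually (\<lambda>z. z \<in> ball 0 r) (nhds (0::complex))"
    using assms(1) by (intro eventually_nhds_in_open) auto
  then have "eventually (\<lambda>z. eval_fps (Abs_fps c) z = F z) (nhds 0)"
    by eventually_elim (auto simp: eval_fps_def intro!: sums_unique[symmetric] assms(2))
  ultimately show ?thesis
    by (simp add: has_fps_expansion_def)
qed

text \<open>The Cauchy product of the Maclaurin series of 1/phi with phi is the series of 1.\<close>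
lemma maclaurin_reciprocal_convolution:
  fixes \<phi> :: "complex poly" and c :: "nat \<Rightarrow> complex"
  assumes "poly \<phi> 0 \<noteq> 0"
    and "\<exists>r>0. \<forall>s::complex. norm s < r \<longrightarrow> (\<lambda>k. c k * s ^ k) sums (1 / poly \<phi> s)"
  shows "(\<Sum>j\<le>k. coeff \<phi> j * c (k - j)) = (if k = 0 then 1 else 0)"
proof -
  obtain r where "r > 0" "\<And>s. norm s < r \<Longrightarrow> (\<lambda>k. c k * s ^ k) sums (1 / poly \<phi> s)"
    using assms(2) by blast
  then have "(\<lambda>s. 1 / poly \<phi> s) has_fps_expansion Abs_fps c"
    by (rule has_fps_expansion_of_sums)
  then have "(\<lambda>s. 1 / poly \<phi> s * poly \<phi> s) has_fps_expansion Abs_fps c * fps_of_poly \<phi>"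
    by (intro has_fps_expansion_mult) (simp_all add: has_fps_expansion_def)
  moreover have "eventually (\<lambda>s. 1 / poly \<phi> s * poly \<phi> s = 1) (nhds (0::complex))"
    using eventually_poly_nonzero_nhds[OF assms(1)] by eventually_elim auto
  ultimately have "(\<lambda>s::complex. 1) has_fps_expansion Abs_fps c * fps_of_poly \<phi>"
    using has_fps_expansion_cong[OF _ refl] by fast
  then have "Abs_fps c * fps_of_poly \<phi> = 1"
    by (intro fps_ext) (simp add: fps_nth_fps_expansion[of "\<lambda>s. 1"])
  then have "(Abs_fps c * fps_of_poly \<phi>) $ k = (if k = 0 then 1 else 0)"
    by simp
  then have "(\<Sum>i\<le>k. c i * coeff \<phi> (k - i)) = (if k = 0 then 1 else 0)"
    by (simp add: fps_mult_nth atLeast0AtMost)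
  also have "(\<Sum>i\<le>k. c i * coeff \<phi> (k - i)) = (\<Sum>j\<le>k. coeff \<phi> j * c (k - j))"
    by (subst sum.atLeastAtMost_rev[of _ 0 k, simplified atLeast0AtMost])
       (auto simp: mult.commute intro!: sum.cong)
  finally show ?thesis .
qed

lemma norm_vector_scalar_mult: "norm (a *s x) = norm a * norm x"
  for x :: "'a::real_normed_field^'n"
  by (simp add: norm_vec_def L2_set_right_distrib norm_mult)

lemma norm_matpow_mult_vec_le:
  assumes "\<And>x. norm (D *v x) \<le> K * norm x" "K \<ge> 0"
  shows "norm (matpow D k *v x) \<le> K ^ k * norm x"
proof (induction k)
  case (Suc k)
  have "norm (matpow D (Suc k) *v x) \<le> K * norm (matpow D k *v x)"
    unfolding matpow_Suc_mult_vec by (rule assms(1))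
  also have "\<dots> \<le> K * (K ^ k * norm x)"
    using Suc assms(2) by (rule mult_left_mono)
  finally show ?case by simp
qed simp

text \<open>Comparison with the scalar series at radius r/2, since |c_k t^k D^k v| <= |c_k| (|t| K)^k |v|.\<close>
lemma summable_matpow_series:
  fixes D :: "complex^'n^'n" and c :: "nat \<Rightarrow> complex"
  assumes "r > 0" "\<And>s. norm s < r \<Longrightarrow> summable (\<lambda>k. c k * s ^ k)"
  shows "\<exists>\<rho>>0. \<forall>t. norm t < \<rho> \<longrightarrow> summable (\<lambda>k. (c k * t ^ k) *s (matpow D k *v v))"
proof -
  obtain K where K: "K > 0" "\<And>x. norm (D *v x) \<le> norm x * K"
    using bounded_linear.pos_bounded[OF matrix_vector_mul_bounded_linear[of D]] by blast
  have "summable (\<lambda>k. (c k * t ^ k) *s (matpow D k *v v))" if t: "norm t < r / (2 * K)" for t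
  proof (rule summable_comparison_test)
    have "summable (\<lambda>k. norm (c k * of_real (norm t * K) ^ k))"
    proof (rule powser_insidea)
      show "summable (\<lambda>k. c k * of_real (r / 2) ^ k)"
        using assms by auto
      show "norm (of_real (norm t * K) :: complex) < norm (of_real (r / 2) :: complex)"
        using t K assms(1) by (simp add: norm_mult field_simps)
    qed
    then show "summable (\<lambda>k. norm (c k) * (norm t * K) ^ k * norm v)"
      using K(1) by (intro summable_mult2) (simp add: norm_mult norm_power)
    have "norm ((c k * t ^ k) *s (matpow D k *v v)) \<le> norm (c k) * (norm t * K) ^ k * norm v" for k
    proof -
      have "norm (matpow D k *v v) \<le> K ^ k * norm v"
        using K by (intro norm_matpow_mult_vec_le) (auto simp: mult.commute)
      then show ?thesis
        by (simp add: norm_vector_scalar_mult norm_mult norm_power power_mult_distrib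
            mult_left_mono mult.assoc)
    qed
    then show "\<exists>N. \<forall>k\<ge>N. norm ((c k * t ^ k) *s (matpow D k *v v)) \<le> norm (c k) * (norm t * K) ^ k * norm v"
      by blast
  qed
  moreover have "r / (2 * K) > 0"
    using assms(1) K(1) by simp
  ultimately show ?thesis by blast
qed

lemma matpow_mult_series_sums_shifted:
  fixes D :: "complex^'n^'n" and c :: "nat \<Rightarrow> complex"
  assumes "summable (\<lambda>k. (c k * t ^ k) *s (matpow D k *v v))"
  shows "(\<lambda>k. if j \<le> k then (a * c (k - j) * t ^ k) *s (matpow D k *v v) else 0)
           sums ((a * t ^ j) *s (matpow D j *v (\<Sum>k. (c k * t ^ k) *s (matpow D k *v v))))"
proof -
  let ?M = "mat_scale (a * t ^ j) (matpow D j)"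
  have "(\<lambda>k. ?M *v ((c k * t ^ k) *s (matpow D k *v v)))
          sums (?M *v (\<Sum>k. (c k * t ^ k) *s (matpow D k *v v)))"
    using assms by (intro bounded_linear.sums[OF matrix_vector_mul_bounded_linear] summable_sums)
  moreover have "?M *v ((c k * t ^ k) *s (matpow D k *v v)) =
                   (a * c k * t ^ (k + j)) *s (matpow D (k + j) *v v)" for k
    unfolding mat_scale_mult_vec
    by (simp add: vector_scalar_commute matrix_vector_mul_assoc matpow_add power_add mult_ac
        add.commute)
  ultimately show ?thesis
    by (subst sums_zero_iff_shift[of j, symmetric]) (auto simp: mat_scale_mult_vec)
qed

text \<open>Summing the shifted series over the coefficients of phi, the coefficient of t^k D^k v is
  the convolution of phi with c.\<close>
lemma poly_matrix_mat_scale_mult_series: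
  fixes D :: "complex^'n^'n" and c :: "nat \<Rightarrow> complex"
  assumes summable: "summable (\<lambda>k. (c k * t ^ k) *s (matpow D k *v v))"
    and conv: "\<And>k. (\<Sum>j\<le>k. coeff \<phi> j * c (k - j)) = (if k = 0 then 1 else 0)"
  shows "poly_matrix \<phi> (mat_scale t D) *v (\<Sum>k. (c k * t ^ k) *s (matpow D k *v v)) = v"
proof -
  define W where "W j k = (if j \<le> k then (coeff \<phi> j * c (k - j) * t ^ k) *s (matpow D k *v v) else 0)"
    for j k
  have "(\<lambda>k. \<Sum>j\<le>degree \<phi>. W j k) sums
          (poly_matrix \<phi> (mat_scale t D) *v (\<Sum>k. (c k * t ^ k) *s (matpow D k *v v)))"
    unfolding poly_matrix_mat_scale_mult_vec W_def
    by (intro sums_sum matpow_mult_series_sums_shifted summable)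
  moreover have "(\<Sum>j\<le>degree \<phi>. W j k) = (if k = 0 then v else 0)" for k
  proof -
    have "(\<Sum>j\<le>degree \<phi>. W j k) =
            (\<Sum>j\<in>{..degree \<phi>} \<inter> {..k}. (coeff \<phi> j * c (k - j) * t ^ k) *s (matpow D k *v v))"
      by (simp add: W_def sum.If_cases Int_def)
    also have "\<dots> = (\<Sum>j\<le>k. (coeff \<phi> j * c (k - j) * t ^ k) *s (matpow D k *v v))"
      by (rule sum.mono_neutral_left) (auto simp: coeff_eq_0)
    also have "\<dots> = ((\<Sum>j\<le>k. coeff \<phi> j * c (k - j)) * t ^ k) *s (matpow D k *v v)"
      by (simp add: vec_eq_iff sum_component sum_distrib_right)
    finally show ?thesis
      by (simp add: conv)
  qed
  ultimately have "(\<lambda>k. if k = 0 then v else 0) sums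
                     (poly_matrix \<phi> (mat_scale t D) *v (\<Sum>k. (c k * t ^ k) *s (matpow D k *v v)))"
    by simp
  then show ?thesis
    using sums_single[of 0 "\<lambda>_. v"] sums_unique2 by fastforce
qed

lemma invertible_poly_matrix_mat_scale_iff:
  fixes D :: "'a::field^'n^'n"
  shows "invertible (poly_matrix p (mat_scale t D)) \<longleftrightarrow> poly (det (scaled_poly_matrix p D)) t \<noteq> 0"
  by (simp add: invertible_det_nz poly_matrix_mat_scale det_poly_mat_eval)

lemma matrix_inv_poly_matrix_mat_scale_rational:
  fixes D :: "complex^'n^'n" and \<phi> :: "complex poly"
  assumes "poly \<phi> 0 \<noteq> 0" "invertible (poly_matrix \<phi> D)"
  shows "\<exists>p q :: complex poly. poly q 0 \<noteq> 0 \<and> poly q 1 \<noteq> 0 \<and>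
           (\<forall>t. invertible (poly_matrix \<phi> (mat_scale t D)) \<longrightarrow>
              (matrix_inv (poly_matrix \<phi> (mat_scale t D)) *v v) $ j = poly p t / poly q t)"
proof (intro exI conjI allI impI)
  let ?M = "scaled_poly_matrix \<phi> D"
  show "poly (det ?M) 0 \<noteq> 0"
    using assms(1) by (simp add: poly_det_scaled_poly_matrix_0)
  show "poly (det ?M) 1 \<noteq> 0"
    using assms(2) invertible_poly_matrix_mat_scale_iff[of \<phi> 1 D] by (simp add: poly_matrix_mat_scale_1)
  fix t :: complex
  assume "invertible (poly_matrix \<phi> (mat_scale t D))"
  then show "(matrix_inv (poly_matrix \<phi> (mat_scale t D)) *v v) $ j =
               poly (det (\<chi> i l. if l = j then [:v $ i:] else ?M $ i $ l)) t / poly (det ?M) t"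
    unfolding poly_matrix_mat_scale by (rule matrix_inv_poly_mat_eval_mult_vec)
qed

lemma eventually_invertible_poly_matrix_mat_scale:
  fixes D :: "complex^'n^'n" and \<phi> :: "complex poly"
  assumes "poly \<phi> 0 \<noteq> 0"
  shows "\<exists>r>0. \<forall>t. norm t < r \<longrightarrow> invertible (poly_matrix \<phi> (mat_scale t D))"
proof -
  let ?q = "det (scaled_poly_matrix \<phi> D)"
  have "poly ?q 0 \<noteq> 0"
    using assms by (simp add: poly_det_scaled_poly_matrix_0)
  then have "eventually (\<lambda>t. poly ?q t \<noteq> 0) (nhds 0)"
    by (rule eventually_poly_nonzero_nhds)
  then show ?thesis
    unfolding eventually_nhds_metric invertible_poly_matrix_mat_scale_iff by (simp add: dist_norm)
qed

lemma matpow_series_sums_matrix_inv: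
  fixes D :: "complex^'n^'n" and \<phi> :: "complex poly" and c :: "nat \<Rightarrow> complex"
  assumes a0: "poly \<phi> 0 \<noteq> 0"
    and maclaurin: "\<exists>r>0. \<forall>s::complex. norm s < r \<longrightarrow> (\<lambda>k. c k * s ^ k) sums (1 / poly \<phi> s)"
  shows "\<exists>r>0. \<forall>t. norm t < r \<longrightarrow>
           invertible (poly_matrix \<phi> (mat_scale t D)) \<and>
           (\<lambda>k. (c k * t ^ k) *s (matpow D k *v v)) sums (matrix_inv (poly_matrix \<phi> (mat_scale t D)) *v v)"
proof -
  obtain r0 where r0: "r0 > 0" "\<And>s. norm s < r0 \<Longrightarrow> (\<lambda>k. c k * s ^ k) sums (1 / poly \<phi> s)"
    using maclaurin by blast
  obtain r1 where r1: "r1 > 0"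
    "\<And>t. norm t < r1 \<Longrightarrow> summable (\<lambda>k. (c k * t ^ k) *s (matpow D k *v v))"
    using summable_matpow_series[OF r0(1) sums_summable[OF r0(2)]] by blast
  obtain r2 where r2: "r2 > 0" "\<And>t. norm t < r2 \<Longrightarrow> invertible (poly_matrix \<phi> (mat_scale t D))"
    using eventually_invertible_poly_matrix_mat_scale[OF a0] by blast
  have "invertible (poly_matrix \<phi> (mat_scale t D)) \<and>
          (\<lambda>k. (c k * t ^ k) *s (matpow D k *v v)) sums (matrix_inv (poly_matrix \<phi> (mat_scale t D)) *v v)"
    if "norm t < min r1 r2" for t
  proof
    show inv: "invertible (poly_matrix \<phi> (mat_scale t D))"
      using r2 that by simp
    have "summable (\<lambda>k. (c k * t ^ k) *s (matpow D k *v v))"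
      using r1 that by simp
    moreover have "matrix_inv (poly_matrix \<phi> (mat_scale t D)) *v v = (\<Sum>k. (c k * t ^ k) *s (matpow D k *v v))"
      using calculation
      by (intro matrix_inv_mult_vec_eqI inv poly_matrix_mat_scale_mult_series
          maclaurin_reciprocal_convolution[OF a0 maclaurin])
    ultimately show "(\<lambda>k. (c k * t ^ k) *s (matpow D k *v v)) sums (matrix_inv (poly_matrix \<phi> (mat_scale t D)) *v v)"
      by (simp add: summable_sums)
  qed
  moreover have "min r1 r2 > 0"
    using r1 r2 by simp
  ultimately show ?thesis by blast
qed

text \<open>The rational function p/q is the required analytic continuation on the complement of
  the finitely many roots of q, which is open and connected.\<close>
lemma euler_sums_rational:
  fixes a :: "nat \<Rightarrow> complex" and p q :: "complex poly"
  assumes "r > 0" "\<And>t. norm t < r \<Longrightarrow> (\<lambda>n. a n * t ^ n) sums (poly p t / poly q t)"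
    and "poly q 0 \<noteq> 0" "poly q 1 \<noteq> 0"
  shows "euler_sums a (poly p 1 / poly q 1)"
proof -
  define U where "U = - {t. poly q t = 0}"
  have fin: "finite {t. poly q t = 0}"
    by (rule poly_roots_finite) (use assms(3) in auto)
  have "open U"
    using fin by (simp add: U_def finite_imp_closed open_Compl)
  moreover have "connected U"
    unfolding U_def using fin
    by (intro path_connected_imp_connected path_connected_complement_countable)
       (auto intro: countable_finite)
  moreover have "(\<lambda>t. poly p t / poly q t) holomorphic_on U"
    unfolding U_def by (intro holomorphic_intros) auto
  moreover have "\<forall>t\<in>U \<inter> ball 0 r. poly p t / poly q t = (\<Sum>n. a n * t ^ n)"
    using assms(2) by (simp add: sums_iff)
  moreover have "\<forall>t. norm t < r \<longrightarrow> summable (\<lambda>n. a n * t ^ n)"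
    using assms(2) sums_summable by blast
  moreover have "0 \<in> U" "1 \<in> U"
    using assms(3,4) by (auto simp: U_def)
  ultimately show ?thesis
    unfolding euler_sums_def using assms(1) by blast
qed

lemma euler_sums_component:
  fixes Y :: "nat \<Rightarrow> complex^'n" and S :: "complex \<Rightarrow> complex^'n" and c :: "nat \<Rightarrow> complex"
  assumes "r > 0" "\<And>t. norm t < r \<Longrightarrow> (\<lambda>k. (c k * t ^ k) *s Y k) sums S t"
    and "\<And>t. norm t < r \<Longrightarrow> S t $ j = poly p t / poly q t"
    and "poly q 0 \<noteq> 0" "poly q 1 \<noteq> 0"
  shows "euler_sums (\<lambda>k. (c k *s Y k) $ j) (poly p 1 / poly q 1)"
proof (rule euler_sums_rational[OF assms(1) _ assms(4,5)])
  fix t :: complex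
  assume t: "norm t < r"
  have "(\<lambda>k. ((c k * t ^ k) *s Y k) $ j) sums (S t $ j)"
    by (rule bounded_linear.sums[OF bounded_linear_vec_nth assms(2)[OF t]])
  then show "(\<lambda>k. (c k *s Y k) $ j * t ^ k) sums (poly p t / poly q t)"
    using assms(3)[OF t] by (simp add: mult_ac)
qed

lemma has_vector_derivative_basis_comb:
  fixes f :: "'m::finite \<Rightarrow> real \<Rightarrow> complex" and D :: "complex^'m^'m"
  assumes D_deriv: "\<And>i x. (f i has_vector_derivative (\<Sum>j\<in>UNIV. D $ j $ i * f j x)) (at x)"
  shows "((\<lambda>x. \<Sum>i\<in>UNIV. v $ i * f i x) has_vector_derivative (\<Sum>i\<in>UNIV. (D *v v) $ i * f i x)) (at x)"
proof -
  have "((\<lambda>x. \<Sum>i\<in>UNIV. v $ i * f i x) has_vector_derivative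
         (\<Sum>i\<in>UNIV. v $ i * (\<Sum>j\<in>UNIV. D $ j $ i * f j x))) (at x)"
    by (intro has_vector_derivative_sum has_vector_derivative_mult_right D_deriv)
  also have "(\<Sum>i\<in>UNIV. v $ i * (\<Sum>j\<in>UNIV. D $ j $ i * f j x)) =
             (\<Sum>j\<in>UNIV. \<Sum>i\<in>UNIV. D $ j $ i * v $ i * f j x)"
    by (subst sum.swap) (simp add: sum_distrib_left mult_ac)
  also have "\<dots> = (\<Sum>j\<in>UNIV. (D *v v) $ j * f j x)"
    by (simp add: matrix_vector_mult_def sum_distrib_right)
  finally show ?thesis .
qed

lemma nth_vderiv_basis_comb:
  fixes f :: "'m::finite \<Rightarrow> real \<Rightarrow> complex" and D :: "complex^'m^'m"
  assumes "\<And>i x. (f i has_vector_derivative (\<Sum>j\<in>UNIV. D $ j $ i * f j x)) (at x)"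
  shows "nth_vderiv k (\<lambda>x. \<Sum>i\<in>UNIV. v $ i * f i x) = (\<lambda>x. \<Sum>i\<in>UNIV. (matpow D k *v v) $ i * f i x)"
  by (induction k)
     (simp_all add: vector_derivative_at[OF has_vector_derivative_basis_comb[OF assms]]
        matrix_vector_mul_assoc)

lemma nth_vderiv_basis_comb_has_vector_derivative:
  fixes f :: "'m::finite \<Rightarrow> real \<Rightarrow> complex" and D :: "complex^'m^'m"
  assumes "\<And>i x. (f i has_vector_derivative (\<Sum>j\<in>UNIV. D $ j $ i * f j x)) (at x)"
  shows "(nth_vderiv k (\<lambda>x. \<Sum>i\<in>UNIV. v $ i * f i x) has_vector_derivative
            nth_vderiv (Suc k) (\<lambda>x. \<Sum>i\<in>UNIV. v $ i * f i x) x) (at x)"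
  using has_vector_derivative_basis_comb[OF assms, of "matpow D k *v v" x]
  unfolding nth_vderiv_basis_comb[OF assms] by (simp add: matrix_vector_mul_assoc)

lemma poly_diff_op_basis_comb:
  fixes f :: "'m::finite \<Rightarrow> real \<Rightarrow> complex" and D :: "complex^'m^'m"
  assumes "\<And>i x. (f i has_vector_derivative (\<Sum>j\<in>UNIV. D $ j $ i * f j x)) (at x)"
  shows "(\<Sum>k\<le>degree \<phi>. coeff \<phi> k * nth_vderiv k (\<lambda>x. \<Sum>i\<in>UNIV. v $ i * f i x) x) =
           (\<Sum>i\<in>UNIV. (poly_matrix \<phi> D *v v) $ i * f i x)"
proof -
  have "(\<Sum>k\<le>degree \<phi>. coeff \<phi> k * nth_vderiv k (\<lambda>x. \<Sum>i\<in>UNIV. v $ i * f i x) x) =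
          (\<Sum>i\<in>UNIV. \<Sum>k\<le>degree \<phi>. coeff \<phi> k * (matpow D k *v v) $ i * f i x)"
    by (subst sum.swap) (simp add: nth_vderiv_basis_comb[OF assms] sum_distrib_left mult_ac)
  also have "\<dots> = (\<Sum>i\<in>UNIV. (poly_matrix \<phi> D *v v) $ i * f i x)"
    by (simp add: poly_matrix_mult_vec sum_component sum_distrib_right)
  finally show ?thesis .
qed

theorem mainTheorem4:
  fixes f :: "'m::finite \<Rightarrow> real \<Rightarrow> complex"
    and D :: "complex^'m^'m"
    and \<phi> :: "complex poly" and n :: nat
    and c :: "nat \<Rightarrow> complex"
    and gv :: "complex^'m"
  assumes basis_indep: "\<And>a. (\<forall>x. (\<Sum>i\<in>UNIV. a i * f i x) = 0) \<Longrightarrow> (\<forall>i. a i = 0)"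
    and D_deriv: "\<And>i x. (f i has_vector_derivative (\<Sum>j\<in>UNIV. D $ j $ i * f j x)) (at x)"
    and deg: "degree \<phi> = n"
    and a0: "poly \<phi> 0 \<noteq> 0"
    and maclaurin: "\<exists>r>0. \<forall>s::complex. norm s < r \<longrightarrow> (\<lambda>k. c k * s ^ k) sums (1 / poly \<phi> s)"
    and inv: "invertible (poly_matrix \<phi> D)"
  shows
    "(\<exists>r>0. \<forall>t::complex. norm t < r \<longrightarrow>
         invertible (poly_matrix \<phi> (mat_scale t D)) \<and>
         (\<lambda>k. (c k * t ^ k) *s (matpow D k *v gv))
            sums (matrix_inv (poly_matrix \<phi> (mat_scale t D)) *v gv))
     \<and> (\<forall>j. \<exists>p q :: complex poly. poly q 0 \<noteq> 0 \<and> poly q 1 \<noteq> 0 \<and>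
            (\<forall>t. invertible (poly_matrix \<phi> (mat_scale t D)) \<longrightarrow>
               (matrix_inv (poly_matrix \<phi> (mat_scale t D)) *v gv) $ j = poly p t / poly q t))
     \<and> (\<forall>j. euler_sums (\<lambda>k. ((c k) *s (matpow D k *v gv)) $ j)
                        ((matrix_inv (poly_matrix \<phi> D) *v gv) $ j))
     \<and> (let yp = (\<lambda>x. \<Sum>i\<in>UNIV. (matrix_inv (poly_matrix \<phi> D) *v gv) $ i * f i x);
            g = (\<lambda>x. \<Sum>i\<in>UNIV. gv $ i * f i x)
        in (\<forall>k x. (nth_vderiv k yp has_vector_derivative nth_vderiv (Suc k) yp x) (at x)) \<and>
           (\<forall>x. (\<Sum>k\<le>degree \<phi>. coeff \<phi> k * nth_vderiv k yp x) = g x))"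
proof -
  let ?A = "\<lambda>t. poly_matrix \<phi> (mat_scale t D)"
  obtain r where r: "r > 0" "\<And>t. norm t < r \<Longrightarrow> invertible (?A t) \<and>
      (\<lambda>k. (c k * t ^ k) *s (matpow D k *v gv)) sums (matrix_inv (?A t) *v gv)"
    using matpow_series_sums_matrix_inv[OF a0 maclaurin] by blast
  have rational: "\<exists>p q :: complex poly. poly q 0 \<noteq> 0 \<and> poly q 1 \<noteq> 0 \<and>
      (\<forall>t. invertible (?A t) \<longrightarrow> (matrix_inv (?A t) *v gv) $ j = poly p t / poly q t)" for j
    using matrix_inv_poly_matrix_mat_scale_rational[OF a0 inv] .
  have "euler_sums (\<lambda>k. (c k *s (matpow D k *v gv)) $ j) ((matrix_inv (poly_matrix \<phi> D) *v gv) $ j)" for j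
  proof -
    obtain p q :: "complex poly" where pq: "poly q 0 \<noteq> 0" "poly q 1 \<noteq> 0"
      "\<forall>t. invertible (?A t) \<longrightarrow> (matrix_inv (?A t) *v gv) $ j = poly p t / poly q t"
      using rational[of j] by blast
    have "euler_sums (\<lambda>k. (c k *s (matpow D k *v gv)) $ j) (poly p 1 / poly q 1)"
      by (rule euler_sums_component[OF r(1) _ _ pq(1,2)]) (use r pq(3) in blast)+
    moreover have "(matrix_inv (poly_matrix \<phi> D) *v gv) $ j = poly p 1 / poly q 1"
      using pq(3)[rule_format, of 1] inv by (simp add: poly_matrix_mat_scale_1)
    ultimately show ?thesis
      by simp
  qed
  then show ?thesis
    using r rational nth_vderiv_basis_comb_has_vector_derivative[OF D_deriv]
    by (auto simp: Let_def poly_diff_op_basis_comb[OF D_deriv] mult_matrix_inv_mult_vec[OF inv])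
qed

end
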